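(* Let $M$ be a matroid of rank $r$ on a finite linearly ordered set $E$. Then $M=M(E,\mathcal V_0,\mathcal V_1,\dots,\mathcal V_{r-1})$.
   Context: Graded lexicographic order on $2^E$: $X\prec Y$ if $|X|<|Y|$, or $|X|=|Y|$ and $\min(X\triangle Y)\in X$; $\min\mathcal X$ is the $\prec$-smallest member. $X$ is $k$-closed in $M$ if $\mathrm{cl}_M(Y)\subseteq X$ for all $Y\subseteq X$ with $|Y|\le k$; $\mathrm{cl}_k(X)$ is the intersection of all $k$-closed supersets of $X$ (so $\mathrm{cl}_{-1}(X)=X$). For a flat $F$ of rank $k$, $U^*_F=\min\{U:\mathrm{cl}_{k-1}(U)=F\}$; $\mathcal U^*_k=\{U^*_F: F\text{ a flat of rank }k,\ |U^*_F|>k\}$. $V\subseteq U$ is consecutive in $U$ if there are no $e,g\in V$, $f\in U\setminus V$ with $e<f<g$. For $U\in\mathcal U^*_k$, $\mathcal V(U)$ is the set of consecutive $(k+1)$-subsets of $U$, and $\mathcal V_k=\bigcup_{U\in\mathcal U^*_k}\mathcal V(U)$. Erections: for a matroid $N$ of rank $\rho$ with independent sets $\mathcal I$, $T(N)=(E,\{I\in\mathcal I:|I|\le\rho-1\})$, and $N'$ is an erection of $N$ if $T(N')=N$ or $N'=N$. Knuth's procedure on input $N$ (rank $\rho$) and $\mathcal U\subseteq 2^E$: initialise $\mathcal H\leftarrow\mathcal U\cup\{F\cup\{e\}: F\text{ a hyperplane of }N,\ e\notin F\}$; while there are distinct $H,H'\in\mathcal H$ with $r_N(H\cap H')=\rho$,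 replace them by $H\cup H'$. It is known (Knuth) that the output does not depend on the choices and is the set of rank-$\rho$ flats of an erection of $N$, denoted $N\uparrow\mathcal U$ (equal to $N$ if the output is $\{E\}$). With $M_0$ the rank-$0$ matroid on $E$, $M(E,\mathcal U_0,\dots,\mathcal U_k)=(\cdots((M_0\uparrow\mathcal U_0)\uparrow\mathcal U_1)\cdots)\uparrow\mathcal U_k$. *)

theory Defs
  imports Main
begin

definition matroid :: "'a set \<Rightarrow> 'a set set \<Rightarrow> bool" where
  "matroid E I \<longleftrightarrow> finite E \<and> (\<forall>X\<in>I. X \<subseteq> E) \<and> {} \<in> I \<and>
     (\<forall>X Y. X \<in> I \<and> Y \<subseteq> X \<longrightarrow> Y \<in> I) \<and>
     (\<forall>X Y. X \<in> I \<and> Y \<in> I \<and> card X < card Y \<longrightarrow> (\<exists>e\<in>Y - X. insert e X \<in> I))"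

definition rk :: "'a set set \<Rightarrow> 'a set \<Rightarrow> nat" where
  "rk I X = Max (card ` {Y. Y \<subseteq> X \<and> Y \<in> I})"

definition cl :: "'a set \<Rightarrow> 'a set set \<Rightarrow> 'a set \<Rightarrow> 'a set" where
  "cl E I X = {e \<in> E. rk I (insert e X) = rk I X}"

definition flat :: "'a set \<Rightarrow> 'a set set \<Rightarrow> 'a set \<Rightarrow> bool" where
  "flat E I F \<longleftrightarrow> F \<subseteq> E \<and> cl E I F = F"

definition k_closed :: "'a set \<Rightarrow> 'a set set \<Rightarrow> int \<Rightarrow> 'a set \<Rightarrow> bool" where
  "k_closed E I k X \<longleftrightarrow> X \<subseteq> E \<and> (\<forall>Y. Y \<subseteq> X \<and> int (card Y) \<le> k \<longrightarrow> cl E I Y \<subseteq> X)"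

definition clk :: "'a set \<Rightarrow> 'a set set \<Rightarrow> int \<Rightarrow> 'a set \<Rightarrow> 'a set" where
  "clk E I k X = \<Inter> {Z. X \<subseteq> Z \<and> k_closed E I k Z}"

definition glex_less :: "'a::linorder set \<Rightarrow> 'a set \<Rightarrow> bool" where
  "glex_less X Y \<longleftrightarrow> card X < card Y \<or>
     (card X = card Y \<and> X \<noteq> Y \<and> Min ((X - Y) \<union> (Y - X)) \<in> X)"

definition glex_min :: "'a::linorder set set \<Rightarrow> 'a set" where
  "glex_min \<X> = (THE X. X \<in> \<X> \<and> (\<forall>Y\<in>\<X>. Y \<noteq> X \<longrightarrow> glex_less X Y))"

definition Ustar :: "'a::linorder set \<Rightarrow> 'a set set \<Rightarrow> 'a set \<Rightarrow> 'a set" where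
  "Ustar E I F = glex_min {U. U \<subseteq> E \<and> clk E I (int (rk I F) - 1) U = F}"

definition Ustar_k :: "'a::linorder set \<Rightarrow> 'a set set \<Rightarrow> nat \<Rightarrow> 'a set set" where
  "Ustar_k E I k = {Ustar E I F | F. flat E I F \<and> rk I F = k \<and> card (Ustar E I F) > k}"

definition consecutive :: "'a::linorder set \<Rightarrow> 'a set \<Rightarrow> bool" where
  "consecutive V U \<longleftrightarrow> V \<subseteq> U \<and>
     \<not> (\<exists>e\<in>V. \<exists>g\<in>V. \<exists>f\<in>U - V. e < f \<and> f < g)"

definition Vsets :: "nat \<Rightarrow> 'a::linorder set \<Rightarrow> 'a set set" where
  "Vsets k U = {V. consecutive V U \<and> card V = k + 1}"

definition V_k :: "'a::linorder set \<Rightarrow> 'a set set \<Rightarrow> nat \<Rightarrow> 'a set set" where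
  "V_k E I k = (\<Union>U\<in>Ustar_k E I k. Vsets k U)"

definition knuth_step :: "'a set \<Rightarrow> 'a set set \<Rightarrow> 'a set set \<Rightarrow> 'a set set \<Rightarrow> bool" where
  "knuth_step E I \<H> \<H>' \<longleftrightarrow> (\<exists>A B. A \<in> \<H> \<and> B \<in> \<H> \<and> A \<noteq> B \<and>
      rk I (A \<inter> B) = rk I E \<and> \<H>' = insert (A \<union> B) (\<H> - {A, B}))"

definition knuth_init :: "'a set \<Rightarrow> 'a set set \<Rightarrow> 'a set set \<Rightarrow> 'a set set" where
  "knuth_init E I \<U> = \<U> \<union>
     {insert e F | F e. flat E I F \<and> rk I F + 1 = rk I E \<and> e \<in> E - F}"

definition knuth_out :: "'a set \<Rightarrow> 'a set set \<Rightarrow> 'a set set \<Rightarrow> 'a set set" where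
  "knuth_out E I \<U> = (SOME \<H>. (knuth_step E I)\<^sup>*\<^sup>* (knuth_init E I \<U>) \<H> \<and>
                                 \<not> (\<exists>\<H>'. knuth_step E I \<H> \<H>'))"

text \<open>N \<up> U: independent sets of the erection whose rank-rho flats are the output of the
  procedure (rank rho + 1), which is N itself when the output is {E}.\<close>

definition erect :: "'a set \<Rightarrow> 'a set set \<Rightarrow> 'a set set \<Rightarrow> 'a set set" where
  "erect E I \<U> = I \<union> {J. J \<subseteq> E \<and> card J = rk I E + 1 \<and>
                         \<not> (\<exists>H\<in>knuth_out E I \<U>. J \<subseteq> H)}"

definition M_seq :: "'a set \<Rightarrow> 'a set set list \<Rightarrow> 'a set set" where
  "M_seq E Us = foldl (erect E) {{}} Us"

end

theory Submission
  imports Defs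
begin

text \<open>Let T_k be the truncation of M to rank k. By induction on k it suffices that erecting T_k
  by V_k yields T_(k+1), i.e. that a (k+1)-set is dependent exactly when it lies in a set of the
  final family of Knuth's procedure. Submodularity keeps every such set of rank at most k, and two
  of them sharing a rank-k subset would have been merged. A dependent (k+1)-set lies in a rank-k
  flat G, so it remains to put G inside one final set. Every final set of rank k is
  (k-1)-closed, hence contains G as soon as it contains U*_G; and U*_G lies in one final set,
  either because it is a basis of G and thus sits in a hyperplane-plus-point initial set, or
  because its consecutive (k+1)-subsets are initial sets overlapping in independent k-sets.\<close>

section \<open>Graded lexicographic order\<close>

definition lex_set_less :: "'a::linorder set \<Rightarrow> 'a set \<Rightarrow> bool" where
  "lex_set_less X Y \<longleftrightarrow> (\<exists>a\<in>X - Y. \<forall>b<a. b \<in> X \<longleftrightarrow> b \<in> Y)"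

lemma Min_symdiff_in_iff_lex_set_less:
  assumes "finite X" "finite Y" "X \<noteq> Y"
  shows "Min ((X - Y) \<union> (Y - X)) \<in> X \<longleftrightarrow> lex_set_less X Y"
proof -
  let ?D = "(X - Y) \<union> (Y - X)"
  have fin: "finite ?D" and "?D \<noteq> {}"
    using assms by auto
  then have Min_D: "Min ?D \<in> ?D"
    by (rule Min_in)
  have below_Min: "b \<in> X \<longleftrightarrow> b \<in> Y" if "b < Min ?D" for b
    using Min_le[OF fin, of b] that by (metis Diff_iff Un_iff leD)
  show ?thesis
  proof
    assume "Min ?D \<in> X"
    then show "lex_set_less X Y"
      unfolding lex_set_less_def using Min_D below_Min by blast
  next
    assume "lex_set_less X Y"
    then obtain a where a: "a \<in> X - Y" "\<forall>b<a. b \<in> X \<longleftrightarrow> b \<in> Y"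
      unfolding lex_set_less_def by blast
    then have "Min ?D \<le> a"
      using Min_le[OF fin] by blast
    moreover have "\<not> Min ?D < a"
      using a(2) Min_D by blast
    ultimately show "Min ?D \<in> X"
      using a(1) by (metis DiffD1 order_le_less)
  qed
qed

lemma lex_set_less_trans:
  assumes "lex_set_less X Y" "lex_set_less Y Z"
  shows "lex_set_less X Z"
proof -
  obtain a where a: "a \<in> X - Y" "\<And>c. c < a \<Longrightarrow> c \<in> X \<longleftrightarrow> c \<in> Y"
    using assms(1) unfolding lex_set_less_def by blast
  obtain b where b: "b \<in> Y - Z" "\<And>c. c < b \<Longrightarrow> c \<in> Y \<longleftrightarrow> c \<in> Z"
    using assms(2) unfolding lex_set_less_def by blast
  consider "a < b" | "b < a" | "a = b"
    using less_linear by blast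
  then show ?thesis
  proof cases
    case 1
    then have "a \<in> X - Z" "\<forall>c<a. c \<in> X \<longleftrightarrow> c \<in> Z"
      using a b by auto
    then show ?thesis unfolding lex_set_less_def by blast
  next
    case 2
    then have "b \<in> X - Z" "\<forall>c<b. c \<in> X \<longleftrightarrow> c \<in> Z"
      using a b by auto
    then show ?thesis unfolding lex_set_less_def by blast
  qed (use a b in blast)
qed

lemma lex_set_less_asym: "lex_set_less X Y \<Longrightarrow> \<not> lex_set_less Y X"
  unfolding lex_set_less_def by (metis DiffD1 DiffD2 less_linear)

lemma glex_less_iff:
  assumes "finite X" "finite Y"
  shows "glex_less X Y \<longleftrightarrow> card X < card Y \<or> (card X = card Y \<and> lex_set_less X Y)"
proof -
  have "lex_set_less X Y \<Longrightarrow> X \<noteq> Y"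
    unfolding lex_set_less_def by blast
  then show ?thesis
    unfolding glex_less_def using Min_symdiff_in_iff_lex_set_less[OF assms] by blast
qed

lemma glex_less_trans:
  assumes fin: "finite X" "finite Y" "finite Z" and "glex_less X Y" "glex_less Y Z"
  shows "glex_less X Z"
proof -
  have XY: "card X < card Y \<or> (card X = card Y \<and> lex_set_less X Y)"
    and YZ: "card Y < card Z \<or> (card Y = card Z \<and> lex_set_less Y Z)"
    using assms glex_less_iff by blast+
  then have "card X < card Z \<or> (card X = card Z \<and> lex_set_less X Z)"
    using lex_set_less_trans by (elim disjE) auto
  then show ?thesis
    using glex_less_iff[OF fin(1,3)] by blast
qed

lemma glex_less_asym:
  assumes "finite X" "finite Y" "glex_less X Y"
  shows "\<not> glex_less Y X"
proof
  assume "glex_less Y X"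
  then have "card Y < card X \<or> (card Y = card X \<and> lex_set_less Y X)"
    using assms glex_less_iff by blast
  moreover have "card X < card Y \<or> (card X = card Y \<and> lex_set_less X Y)"
    using assms glex_less_iff by blast
  ultimately show False
    using lex_set_less_asym by auto
qed

lemma glex_less_total:
  assumes "finite X" "finite Y" "X \<noteq> Y"
  shows "glex_less X Y \<or> glex_less Y X"
proof -
  let ?D = "(X - Y) \<union> (Y - X)"
  have "Min ?D \<in> ?D"
    using assms by (intro Min_in) auto
  moreover have "(Y - X) \<union> (X - Y) = ?D"
    by blast
  ultimately show ?thesis
    unfolding glex_less_def using assms(3) by (metis DiffD1 UnE linorder_neqE_nat)
qed

lemma glex_least_exists:
  assumes "finite \<X>" "\<X> \<noteq> {}" "\<forall>X\<in>\<X>. finite X"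
  shows "\<exists>X\<in>\<X>. \<forall>Y\<in>\<X>. Y \<noteq> X \<longrightarrow> glex_less X Y"
  using assms
proof (induction \<X> rule: finite_ne_induct)
  case (insert X \<X>)
  have fin: "finite X" "\<forall>Y\<in>\<X>. finite Y"
    using insert.prems by simp_all
  obtain M where M: "M \<in> \<X>" "\<forall>Y\<in>\<X>. Y \<noteq> M \<longrightarrow> glex_less M Y"
    using insert.IH[OF fin(2)] by blast
  show ?case
  proof (cases "glex_less X M")
    case True
    have "glex_less X Y" if "Y \<in> \<X>" for Y
    proof (cases "Y = M")
      case False
      then have "glex_less M Y"
        using M(2) that by blast
      with True show ?thesis
        using glex_less_trans[of X M Y] fin M(1) that by blast
    qed (use True in simp)
    then show ?thesis
      by (intro bexI[of _ X]) auto
  next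
    case False
    then have "glex_less M X"
      using glex_less_total[of X M] fin insert.hyps(3) M(1) by blast
    then show ?thesis
      using M by (intro bexI[of _ M]) auto
  qed
qed simp

lemma glex_min_least:
  assumes "finite \<X>" "\<X> \<noteq> {}" "\<forall>X\<in>\<X>. finite X"
  shows "glex_min \<X> \<in> \<X> \<and> (\<forall>Y\<in>\<X>. Y \<noteq> glex_min \<X> \<longrightarrow> glex_less (glex_min \<X>) Y)"
  unfolding glex_min_def
proof (rule theI')
  show "\<exists>!X. X \<in> \<X> \<and> (\<forall>Y\<in>\<X>. Y \<noteq> X \<longrightarrow> glex_less X Y)"
    using glex_least_exists[OF assms] glex_less_asym assms(3) by metis
qed

lemma card_glex_min_le:
  assumes "finite \<X>" "\<X> \<noteq> {}" "\<forall>X\<in>\<X>. finite X" "Y \<in> \<X>"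
  shows "card (glex_min \<X>) \<le> card Y"
  using glex_min_least[OF assms(1-3)] assms(4) unfolding glex_less_def by fastforce

section \<open>Consecutive windows\<close>

lemma sorted_list_of_set_nth_less_iff:
  fixes U :: "'a::linorder set"
  assumes "i < card U" "j < card U"
  shows "sorted_list_of_set U ! i < sorted_list_of_set U ! j \<longleftrightarrow> i < j"
proof -
  let ?xs = "sorted_list_of_set U"
  have "sorted_wrt (<) ?xs" "length ?xs = card U"
    by simp_all
  then show ?thesis
    using assms sorted_wrt_nth_less[of "(<)" ?xs] by (metis less_asym linorder_neqE_nat)
qed

lemma card_image_nth_sorted_list_of_set:
  "S \<subseteq> {..<card U} \<Longrightarrow> card ((!) (sorted_list_of_set U) ` S) = card S"
  by (intro card_image inj_on_nth) auto

lemma consecutive_window_in_Vsets: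
  fixes U :: "'a::linorder set"
  assumes "finite U" "i + k < card U"
  shows "(!) (sorted_list_of_set U) ` {i..i + k} \<in> Vsets k U"
proof -
  let ?u = "(!) (sorted_list_of_set U)" and ?V = "(!) (sorted_list_of_set U) ` {i..i + k}"
  have set_xs: "set (sorted_list_of_set U) = U" "length (sorted_list_of_set U) = card U"
    using assms(1) by simp_all
  have u_in: "?u j \<in> U" if "j < card U" for j
    using set_xs that nth_mem by metis
  have u_surj: "\<exists>j<card U. ?u j = x" if "x \<in> U" for x
    using set_xs that in_set_conv_nth by metis
  have "{i..i + k} \<subseteq> {..<card U}"
    using assms(2) by auto
  then have "card ?V = k + 1"
    by (simp add: card_image_nth_sorted_list_of_set)
  moreover have "?V \<subseteq> U"
    using u_in assms(2) by auto
  moreover have "\<not> (\<exists>e\<in>?V. \<exists>g\<in>?V. \<exists>f\<in>U - ?V. e < f \<and> f < g)"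
  proof
    assume "\<exists>e\<in>?V. \<exists>g\<in>?V. \<exists>f\<in>U - ?V. e < f \<and> f < g"
    then obtain a b f where ab: "a \<in> {i..i + k}" "b \<in> {i..i + k}" "f \<in> U - ?V" "?u a < f" "f < ?u b"
      by blast
    obtain j where j: "j < card U" "?u j = f"
      using u_surj ab(3) by blast
    have "a < j" "j < b"
      using ab j assms(2) sorted_list_of_set_nth_less_iff[of _ U] by auto
    then have "f \<in> ?V"
      using ab(1,2) j(2) by auto
    with ab(3) show False
      by blast
  qed
  ultimately show ?thesis
    unfolding Vsets_def consecutive_def by blast
qed

text \<open>Successive windows of k + 1 consecutive elements of U overlap in k elements, so the merging
  hypothesis chains all of them into the member containing the first window.\<close>

lemma subset_member_if_consecutive_windows_covered:
  fixes U :: "'a::linorder set"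
  assumes "finite U" "k < card U"
    and cover: "\<And>V. V \<in> Vsets k U \<Longrightarrow> \<exists>A\<in>\<A>. V \<subseteq> A"
    and merge: "\<And>A B C. A \<in> \<A> \<Longrightarrow> B \<in> \<A> \<Longrightarrow> C \<subseteq> U \<Longrightarrow> card C = k \<Longrightarrow> C \<subseteq> A \<Longrightarrow> C \<subseteq> B
      \<Longrightarrow> A = B"
  shows "\<exists>A\<in>\<A>. U \<subseteq> A"
proof -
  let ?u = "(!) (sorted_list_of_set U)"
  define window where "window i = ?u ` {i..i + k}" for i
  have window: "window i \<in> Vsets k U" if "i + k < card U" for i
    unfolding window_def using consecutive_window_in_Vsets[OF assms(1) that] .
  obtain A where A: "A \<in> \<A>" "window 0 \<subseteq> A"
    using cover window[of 0] assms(2) by auto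
  have "window i \<subseteq> A" if "i + k < card U" for i
    using that
  proof (induction i)
    case (Suc i)
    obtain A' where A': "A' \<in> \<A>" "window (Suc i) \<subseteq> A'"
      using cover window[OF Suc.prems] by blast
    let ?C = "?u ` {Suc i..i + k}"
    have "?C \<subseteq> window i" "?C \<subseteq> window (Suc i)"
      unfolding window_def by (auto intro: image_mono)
    moreover have "{Suc i..i + k} \<subseteq> {..<card U}"
      using Suc.prems by auto
    then have "card ?C = k"
      by (simp add: card_image_nth_sorted_list_of_set)
    moreover have "window (Suc i) \<subseteq> U"
      using window[OF Suc.prems] unfolding Vsets_def consecutive_def by blast
    ultimately have "A = A'"
      using merge[OF A(1) A'(1), of ?C] Suc A' by auto
    then show ?case
      using A' by simp
  qed (use A in simp)
  moreover have "U \<subseteq> (\<Union>i\<in>{i. i + k < card U}. window i)"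
  proof
    fix x assume "x \<in> U"
    then obtain j where j: "j < card U" "?u j = x"
      using assms(1) in_set_conv_nth[of x "sorted_list_of_set U"] by auto
    define i where "i = min j (card U - k - 1)"
    have "i + k < card U" "j \<in> {i..i + k}"
      using j(1) assms(2) unfolding i_def by auto
    then show "x \<in> (\<Union>i\<in>{i. i + k < card U}. window i)"
      unfolding window_def using j(2) by blast
  qed
  ultimately have "U \<subseteq> A"
    by fast
  with A(1) show ?thesis
    by blast
qed

section \<open>Knuth's erection procedure\<close>

text \<open>knuth_out picks a terminal state by SOME; everything below holds for every terminal state.\<close>

definition knuth_final :: "'a set \<Rightarrow> 'a set set \<Rightarrow> 'a set set \<Rightarrow> 'a set set \<Rightarrow> bool" where
  "knuth_final E N \<U> \<H> \<longleftrightarrow>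
     (knuth_step E N)\<^sup>*\<^sup>* (knuth_init E N \<U>) \<H> \<and> \<not> (\<exists>\<H>'. knuth_step E N \<H> \<H>')"

lemma knuth_step_card_less:
  assumes "finite \<H>" "knuth_step E N \<H> \<H>'"
  shows "card \<H>' < card \<H>"
proof -
  obtain A B where AB: "A \<in> \<H>" "B \<in> \<H>" "A \<noteq> B" "\<H>' = insert (A \<union> B) (\<H> - {A, B})"
    using assms(2) unfolding knuth_step_def by blast
  then have sub: "{A, B} \<subseteq> \<H>" and "card {A, B} = 2"
    by auto
  then have "card (\<H> - {A, B}) + 2 = card \<H>"
    using card_mono[OF assms(1) sub] card_Diff_subset[OF _ sub] by simp
  moreover have "card \<H>' \<le> Suc (card (\<H> - {A, B}))"
    using assms(1) AB(4) by (simp add: card_insert_le_m1 card_insert_if)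
  ultimately show ?thesis
    by simp
qed

lemma knuth_step_finite: "finite \<H> \<Longrightarrow> knuth_step E N \<H> \<H>' \<Longrightarrow> finite \<H>'"
  unfolding knuth_step_def by auto

lemma knuth_steps_terminate:
  "finite \<H> \<Longrightarrow> \<exists>\<H>'. (knuth_step E N)\<^sup>*\<^sup>* \<H> \<H>' \<and> \<not> (\<exists>\<H>''. knuth_step E N \<H>' \<H>'')"
proof (induction "card \<H>" arbitrary: \<H> rule: less_induct)
  case less
  show ?case
  proof (cases "\<exists>\<H>''. knuth_step E N \<H> \<H>''")
    case True
    then obtain \<H>'' where step: "knuth_step E N \<H> \<H>''"
      by blast
    then obtain \<H>' where
      "(knuth_step E N)\<^sup>*\<^sup>* \<H>'' \<H>'" "\<not> (\<exists>\<H>'''. knuth_step E N \<H>' \<H>''')"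
      using less.hyps[of \<H>''] less.prems knuth_step_card_less knuth_step_finite by blast
    then show ?thesis
      using step by (meson converse_rtranclp_into_rtranclp)
  qed blast
qed

lemma finite_knuth_init: "finite E \<Longrightarrow> \<U> \<subseteq> Pow E \<Longrightarrow> finite (knuth_init E N \<U>)"
proof -
  assume "finite E" "\<U> \<subseteq> Pow E"
  moreover have "knuth_init E N \<U> \<subseteq> \<U> \<union> Pow E"
    unfolding knuth_init_def flat_def by blast
  ultimately show ?thesis
    by (meson finite_Pow_iff finite_UnI finite_subset)
qed

lemma knuth_out_final:
  "finite (knuth_init E N \<U>) \<Longrightarrow> knuth_final E N \<U> (knuth_out E N \<U>)"
  unfolding knuth_final_def knuth_out_def by (rule someI_ex) (rule knuth_steps_terminate)

lemma knuth_steps_cover: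
  assumes "(knuth_step E N)\<^sup>*\<^sup>* \<H> \<H>'" "A \<in> \<H>"
  shows "\<exists>A'\<in>\<H>'. A \<subseteq> A'"
  using assms
proof (induction rule: rtranclp_induct)
  case (step \<H>1 \<H>2)
  then obtain A1 where A1: "A1 \<in> \<H>1" "A \<subseteq> A1"
    by blast
  obtain B C where "\<H>2 = insert (B \<union> C) (\<H>1 - {B, C})"
    using step(2) unfolding knuth_step_def by blast
  with A1 show ?case
    by (cases "A1 \<in> {B, C}") auto
qed blast

lemma knuth_final_covers_init:
  "knuth_final E N \<U> \<H> \<Longrightarrow> X \<in> knuth_init E N \<U> \<Longrightarrow> \<exists>A\<in>\<H>. X \<subseteq> A"
  unfolding knuth_final_def using knuth_steps_cover by blast

lemma knuth_final_eq_if_rk_Int: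
  assumes "knuth_final E N \<U> \<H>" "A \<in> \<H>" "B \<in> \<H>" "rk N (A \<inter> B) = rk N E"
  shows "A = B"
  using assms unfolding knuth_final_def knuth_step_def by blast

section \<open>Rank, closure and k-closure\<close>

lemma clk_superset: "U \<subseteq> clk E I j U"
  unfolding clk_def by blast

lemma clk_least: "U \<subseteq> Z \<Longrightarrow> k_closed E I j Z \<Longrightarrow> clk E I j U \<subseteq> Z"
  unfolding clk_def by blast

lemma clk_minus_one: "U \<subseteq> E \<Longrightarrow> clk E I (-1) U = U"
proof -
  assume "U \<subseteq> E"
  then have "k_closed E I (-1) U"
    unfolding k_closed_def by simp
  then show ?thesis
    using clk_superset[of U] clk_least[of U U] by blast
qed

locale indep_matroid =
  fixes E :: "'a set" and I :: "'a set set"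
  assumes matroid: "matroid E I"
begin

lemma finite_ground: "finite E"
  and indep_subset_ground: "X \<in> I \<Longrightarrow> X \<subseteq> E"
  and empty_indep: "{} \<in> I"
  and indep_subset: "X \<in> I \<Longrightarrow> Y \<subseteq> X \<Longrightarrow> Y \<in> I"
  and indep_augment: "X \<in> I \<Longrightarrow> Y \<in> I \<Longrightarrow> card X < card Y \<Longrightarrow> \<exists>e\<in>Y - X. insert e X \<in> I"
  using matroid unfolding matroid_def by blast+

lemma indep_finite: "X \<in> I \<Longrightarrow> finite X"
  using indep_subset_ground finite_ground finite_subset by blast

lemma finite_indep_cards: "finite (card ` {Y. Y \<subseteq> X \<and> Y \<in> I})"
proof -
  have "{Y. Y \<subseteq> X \<and> Y \<in> I} \<subseteq> Pow E"
    using indep_subset_ground by blast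
  then show ?thesis
    using finite_ground by (auto intro: finite_subset)
qed

lemma card_le_rk: "Y \<subseteq> X \<Longrightarrow> Y \<in> I \<Longrightarrow> card Y \<le> rk I X"
  unfolding rk_def using finite_indep_cards by (intro Max_ge) auto

lemma rk_basis_exists: "\<exists>B. B \<subseteq> X \<and> B \<in> I \<and> card B = rk I X"
proof -
  have "rk I X \<in> card ` {Y. Y \<subseteq> X \<and> Y \<in> I}"
    unfolding rk_def using finite_indep_cards empty_indep by (intro Max_in) auto
  then show ?thesis by auto
qed

lemma rk_mono: "X \<subseteq> Y \<Longrightarrow> rk I X \<le> rk I Y"
proof -
  assume "X \<subseteq> Y"
  moreover obtain B where "B \<subseteq> X" "B \<in> I" "card B = rk I X"
    using rk_basis_exists by blast
  ultimately show ?thesis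
    using card_le_rk[of B Y] by simp
qed

lemma rk_le_card: "finite X \<Longrightarrow> rk I X \<le> card X"
proof -
  assume "finite X"
  moreover obtain B where "B \<subseteq> X" "card B = rk I X"
    using rk_basis_exists by blast
  ultimately show ?thesis
    using card_mono[of X B] by simp
qed

lemma rk_indep: "X \<in> I \<Longrightarrow> rk I X = card X"
  using card_le_rk[of X X] rk_le_card indep_finite by force

lemma card_indep_le_rk_ground: "X \<in> I \<Longrightarrow> card X \<le> rk I E"
  using card_le_rk indep_subset_ground by blast

lemma rk_insert_le: "rk I (insert e X) \<le> Suc (rk I X)"
proof -
  obtain B where B: "B \<subseteq> insert e X" "B \<in> I" "card B = rk I (insert e X)"
    using rk_basis_exists by blast
  have "B - {e} \<subseteq> X" "B - {e} \<in> I"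
    using B indep_subset by blast+
  then have "card (B - {e}) \<le> rk I X"
    by (rule card_le_rk)
  moreover have "card B \<le> Suc (card (B - {e}))"
    using indep_finite[OF B(2)] by (cases "e \<in> B") (simp_all add: card_Suc_Diff1)
  ultimately show ?thesis using B by simp
qed

lemma basis_extend:
  assumes "B \<subseteq> X" "B \<in> I"
  shows "\<exists>B'. B \<subseteq> B' \<and> B' \<subseteq> X \<and> B' \<in> I \<and> card B' = rk I X"
  using assms
proof (induction "rk I X - card B" arbitrary: B rule: less_induct)
  case less
  show ?case
  proof (cases "card B < rk I X")
    case False
    with card_le_rk[OF less.prems] less.prems show ?thesis by (metis le_antisym not_less order_refl)
  next
    case True
    obtain C where C: "C \<subseteq> X" "C \<in> I" "card C = rk I X"
      using rk_basis_exists by blast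
    then obtain e where e: "e \<in> C - B" "insert e B \<in> I"
      using indep_augment[OF less.prems(2) C(2)] True by auto
    have "card (insert e B) = Suc (card B)"
      using e indep_finite[OF less.prems(2)] by simp
    then have "rk I X - card (insert e B) < rk I X - card B"
      using True by simp
    moreover have "insert e B \<subseteq> X"
      using e C less.prems by blast
    ultimately obtain B' where "insert e B \<subseteq> B'" "B' \<subseteq> X" "B' \<in> I" "card B' = rk I X"
      using less.hyps[of "insert e B"] e by blast
    then show ?thesis by blast
  qed
qed

lemma rk_submodular: "rk I (X \<union> Y) + rk I (X \<inter> Y) \<le> rk I X + rk I Y"
proof -
  obtain B where B: "B \<subseteq> X \<inter> Y" "B \<in> I" "card B = rk I (X \<inter> Y)"
    using rk_basis_exists by blast
  obtain Z where Z: "B \<subseteq> Z" "Z \<subseteq> X \<union> Y" "Z \<in> I" "card Z = rk I (X \<union> Y)"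
    using basis_extend[of B "X \<union> Y"] B by blast
  have fin: "finite Z" using Z indep_finite by blast
  have "card (Z \<inter> X) \<le> rk I X" "card (Z \<inter> Y) \<le> rk I Y"
    using Z indep_subset by (auto intro: card_le_rk)
  moreover have "card B \<le> card (Z \<inter> X \<inter> Y)"
    using B Z fin by (intro card_mono) auto
  moreover have "card (Z \<inter> X) + card (Z \<inter> Y) = card Z + card (Z \<inter> X \<inter> Y)"
  proof -
    have "(Z \<inter> X) \<union> (Z \<inter> Y) = Z" "(Z \<inter> X) \<inter> (Z \<inter> Y) = Z \<inter> X \<inter> Y"
      using Z(2) by blast+
    then show ?thesis
      using card_Un_Int[of "Z \<inter> X" "Z \<inter> Y"] fin by simp
  qed
  ultimately show ?thesis using B(3) Z(4) by linarith
qed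

lemma rk_insert_eq_mono:
  assumes "Y \<subseteq> W" "rk I (insert x Y) = rk I Y"
  shows "rk I (insert x W) = rk I W"
proof -
  have "rk I (insert x W) + rk I (insert x Y \<inter> W) \<le> rk I (insert x Y) + rk I W"
    using rk_submodular[of "insert x Y" W] assms(1) by (simp add: insert_absorb2 sup.absorb2)
  moreover have "rk I Y \<le> rk I (insert x Y \<inter> W)"
    using assms(1) by (intro rk_mono) blast
  moreover have "rk I W \<le> rk I (insert x W)"
    by (intro rk_mono) blast
  ultimately show ?thesis using assms(2) by linarith
qed

lemma rk_Un_eq_if_insert_eq:
  "finite D \<Longrightarrow> (\<And>d. d \<in> D \<Longrightarrow> rk I (insert d W) = rk I W) \<Longrightarrow> rk I (W \<union> D) = rk I W"
proof (induction D rule: finite_induct)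
  case (insert x D)
  have "rk I (W \<union> D) = rk I W"
    using insert.IH insert.prems by blast
  moreover have "rk I (insert x (W \<union> D)) = rk I (W \<union> D)"
    using rk_insert_eq_mono[of W "W \<union> D" x] insert.prems by blast
  ultimately show ?case by simp
qed simp

lemma cl_superset: "X \<subseteq> E \<Longrightarrow> X \<subseteq> cl E I X"
  unfolding cl_def by (auto simp: insert_absorb)

lemma cl_subset_ground: "cl E I X \<subseteq> E"
  unfolding cl_def by blast

lemma cl_mono: "Y \<subseteq> W \<Longrightarrow> cl E I Y \<subseteq> cl E I W"
  unfolding cl_def using rk_insert_eq_mono by blast

lemma rk_cl: "X \<subseteq> E \<Longrightarrow> rk I (cl E I X) = rk I X"
proof -
  assume X: "X \<subseteq> E"
  have "finite (cl E I X)"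
    using cl_subset_ground finite_ground finite_subset by blast
  then have "rk I (X \<union> cl E I X) = rk I X"
    by (intro rk_Un_eq_if_insert_eq) (auto simp: cl_def)
  then show ?thesis
    using cl_superset[OF X] by (simp add: sup.absorb2)
qed

lemma cl_idem: "X \<subseteq> E \<Longrightarrow> cl E I (cl E I X) = cl E I X"
proof
  assume X: "X \<subseteq> E"
  show "cl E I X \<subseteq> cl E I (cl E I X)"
    using cl_superset cl_subset_ground by blast
  show "cl E I (cl E I X) \<subseteq> cl E I X"
  proof
    fix e assume e: "e \<in> cl E I (cl E I X)"
    then have "rk I (insert e (cl E I X)) = rk I X"
      using rk_cl[OF X] unfolding cl_def by auto
    moreover have "rk I (insert e X) \<le> rk I (insert e (cl E I X))"
      using cl_superset[OF X] by (intro rk_mono) blast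
    moreover have "rk I X \<le> rk I (insert e X)"
      by (intro rk_mono) blast
    ultimately show "e \<in> cl E I X"
      using e unfolding cl_def by simp
  qed
qed

lemma flat_cl: "X \<subseteq> E \<Longrightarrow> flat E I (cl E I X)"
  unfolding flat_def using cl_idem cl_subset_ground by blast

lemma rk_insert_not_in_cl:
  assumes "x \<in> E" "x \<notin> cl E I X"
  shows "rk I (insert x X) = Suc (rk I X)"
proof -
  have "rk I (insert x X) \<noteq> rk I X"
    using assms unfolding cl_def by blast
  moreover have "rk I X \<le> rk I (insert x X)"
    by (rule rk_mono) blast
  ultimately show ?thesis
    using rk_insert_le[of x X] by simp
qed

lemma indep_spanning_subset:
  assumes "Y \<subseteq> A" "A \<subseteq> E" "rk I Y \<le> m" "m \<le> rk I A"
  shows "\<exists>B. B \<subseteq> A \<and> B \<in> I \<and> card B = m \<and> Y \<subseteq> cl E I B"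
proof -
  obtain BY where BY: "BY \<subseteq> Y" "BY \<in> I" "card BY = rk I Y"
    using rk_basis_exists by blast
  obtain BA where BA: "BY \<subseteq> BA" "BA \<subseteq> A" "BA \<in> I" "card BA = rk I A"
    using basis_extend[of BY A] BY assms by blast
  have fin: "finite BA" "finite BY"
    using BA BY indep_finite by blast+
  then have "m - card BY \<le> card (BA - BY)"
    using BA BY assms by (simp add: card_Diff_subset)
  then obtain T where T: "T \<subseteq> BA - BY" "card T = m - card BY"
    by (meson obtain_subset_with_card_n)
  define B where "B = BY \<union> T"
  have "card B = m"
    unfolding B_def using T fin assms BY
    by (subst card_Un_disjoint) (auto intro: finite_subset)
  moreover have "B \<in> I" "B \<subseteq> A"
    using indep_subset[OF BA(3)] T BA unfolding B_def by blast+
  moreover have "Y \<subseteq> cl E I BY"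
  proof
    fix y assume y: "y \<in> Y"
    have "rk I (insert y BY) \<le> rk I BY"
      using y BY rk_indep[of BY] by (metis insert_subset rk_mono)
    moreover have "rk I BY \<le> rk I (insert y BY)"
      by (intro rk_mono) blast
    ultimately show "y \<in> cl E I BY"
      using y assms unfolding cl_def by auto
  qed
  then have "Y \<subseteq> cl E I B"
    using cl_mono[of BY B] unfolding B_def by blast
  ultimately show ?thesis by blast
qed

lemma flat_k_closed: "flat E I F \<Longrightarrow> k_closed E I j F"
  unfolding k_closed_def flat_def using cl_mono by blast

lemma clk_flat: "flat E I F \<Longrightarrow> clk E I j F = F"
  using clk_superset[of F] clk_least[OF order_refl flat_k_closed] by (simp add: subset_antisym)

end

section \<open>Truncations\<close>

definition truncation :: "'a set set \<Rightarrow> nat \<Rightarrow> 'a set set" where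
  "truncation I k = {X \<in> I. card X \<le> k}"

context indep_matroid
begin

lemma rk_truncation: "rk (truncation I k) X = min (rk I X) k"
proof -
  let ?S = "card ` {Y. Y \<subseteq> X \<and> Y \<in> truncation I k}"
  have fin: "finite ?S"
    using finite_subset[of ?S "{..k}"] unfolding truncation_def by auto
  have "a \<le> min (rk I X) k" if "a \<in> ?S" for a
    using that card_le_rk unfolding truncation_def by auto
  moreover have "?S \<noteq> {}"
    using empty_indep unfolding truncation_def by auto
  ultimately have upper: "Max ?S \<le> min (rk I X) k"
    using Max_in[OF fin] by blast
  obtain B where B: "B \<subseteq> X" "B \<in> I" "card B = rk I X"
    using rk_basis_exists by blast
  then have "min (rk I X) k \<le> card B"
    by simp
  then obtain C where C: "C \<subseteq> B" "card C = min (rk I X) k"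
    by (meson obtain_subset_with_card_n)
  then have "C \<in> {Y. Y \<subseteq> X \<and> Y \<in> truncation I k}"
    using B indep_subset unfolding truncation_def by auto
  then have "min (rk I X) k \<le> Max ?S"
    using C fin by (metis Max_ge imageI)
  with upper have "Max ?S = min (rk I X) k"
    by (rule antisym)
  then show ?thesis
    unfolding rk_def[of "truncation I k"] .
qed

lemma rk_truncation_ground: "k \<le> rk I E \<Longrightarrow> rk (truncation I k) E = k"
  by (simp add: rk_truncation)

lemma flat_truncation:
  assumes "flat E I F" "Suc (rk I F) = k"
  shows "flat E (truncation I k) F"
proof -
  have "min (rk I (insert x F)) k = min (rk I F) k \<longleftrightarrow> rk I (insert x F) = rk I F" for x
    using rk_mono[of F "insert x F"] rk_insert_le[of x F] assms(2) by auto
  then have "cl E (truncation I k) F = cl E I F"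
    unfolding cl_def rk_truncation by blast
  then show ?thesis
    using assms(1) unfolding flat_def by simp
qed

lemma truncation_0: "truncation I 0 = {{}}"
  unfolding truncation_def using empty_indep indep_finite by auto

lemma truncation_rk_ground: "truncation I (rk I E) = I"
  unfolding truncation_def using card_indep_le_rk_ground by blast

lemma knuth_init_truncation_rk_le:
  assumes "k \<le> rk I E" "\<forall>U\<in>\<U>. U \<subseteq> E \<and> rk I U \<le> k" "X \<in> knuth_init E (truncation I k) \<U>"
  shows "X \<subseteq> E \<and> rk I X \<le> k"
proof (cases "X \<in> \<U>")
  case False
  then obtain F e where Fe: "X = insert e F" "flat E (truncation I k) F"
    "rk (truncation I k) F + 1 = rk (truncation I k) E" "e \<in> E - F"
    using assms(3) unfolding knuth_init_def by blast
  then have "rk I F + 1 = k"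
    using assms(1) by (auto simp: rk_truncation min_def split: if_splits)
  then show ?thesis
    using Fe rk_insert_le[of e F] unfolding flat_def by auto
qed (use assms(2) in blast)

lemma knuth_step_truncation_rk_le:
  assumes "k \<le> rk I E" "knuth_step E (truncation I k) \<H> \<H>'" "\<forall>A\<in>\<H>. A \<subseteq> E \<and> rk I A \<le> k"
  shows "\<forall>A\<in>\<H>'. A \<subseteq> E \<and> rk I A \<le> k"
proof -
  obtain A B where AB: "A \<in> \<H>" "B \<in> \<H>" "rk (truncation I k) (A \<inter> B) = rk (truncation I k) E"
    "\<H>' = insert (A \<union> B) (\<H> - {A, B})"
    using assms(2) unfolding knuth_step_def by blast
  then have "k \<le> rk I (A \<inter> B)"
    using assms(1) by (simp add: rk_truncation)
  moreover have "rk I A \<le> k" "rk I B \<le> k" "A \<union> B \<subseteq> E"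
    using assms(3) AB(1,2) by auto
  ultimately have "rk I (A \<union> B) \<le> k"
    using rk_submodular[of A B] by linarith
  then show ?thesis
    using assms(3) AB(4) \<open>A \<union> B \<subseteq> E\<close> by auto
qed

lemma insert_hyperplane_in_knuth_init_truncation:
  assumes "flat E I F" "rk I F + 1 = k" "k \<le> rk I E" "e \<in> E - F"
  shows "insert e F \<in> knuth_init E (truncation I k) \<U>"
proof -
  have "flat E (truncation I k) F"
    using flat_truncation assms(1,2) by simp
  moreover have "rk (truncation I k) F + 1 = rk (truncation I k) E"
    using assms(2,3) by (simp add: rk_truncation)
  ultimately show ?thesis
    unfolding knuth_init_def using assms(4) by blast
qed

end

section \<open>Erecting a truncation by the sets V_k\<close>

locale ordered_indep_matroid = indep_matroid E I for E :: "'a::linorder set" and I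
begin

lemma Ustar_min_generator:
  assumes "flat E I G"
  shows "Ustar E I G \<subseteq> E \<and> clk E I (int (rk I G) - 1) (Ustar E I G) = G"
    and "U \<subseteq> E \<Longrightarrow> clk E I (int (rk I G) - 1) U = G \<Longrightarrow> card (Ustar E I G) \<le> card U"
proof -
  let ?\<X> = "{U. U \<subseteq> E \<and> clk E I (int (rk I G) - 1) U = G}"
  have "G \<in> ?\<X>"
    using assms clk_flat unfolding flat_def by blast
  then have nonempty: "?\<X> \<noteq> {}"
    by blast
  have fin: "finite ?\<X>" "\<forall>X\<in>?\<X>. finite X"
    using finite_ground by (auto intro: finite_subset[of _ "Pow E"] finite_subset)
  show "Ustar E I G \<subseteq> E \<and> clk E I (int (rk I G) - 1) (Ustar E I G) = G"
    unfolding Ustar_def using glex_min_least[OF fin(1) nonempty fin(2)] by blast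
  show "U \<subseteq> E \<Longrightarrow> clk E I (int (rk I G) - 1) U = G \<Longrightarrow> card (Ustar E I G) \<le> card U"
    unfolding Ustar_def using card_glex_min_le[OF fin(1) nonempty fin(2)] by blast
qed

lemma Ustar_subset_flat: "flat E I G \<Longrightarrow> Ustar E I G \<subseteq> G"
  using clk_superset[of "Ustar E I G"] Ustar_min_generator(1) by metis

lemma finite_Ustar: "flat E I G \<Longrightarrow> finite (Ustar E I G)"
  using Ustar_min_generator(1) finite_ground by (metis finite_subset)

lemma rk_le_card_Ustar:
  assumes "flat E I G"
  shows "rk I G \<le> card (Ustar E I G)"
proof -
  let ?U = "Ustar E I G"
  have U: "?U \<subseteq> E" "clk E I (int (rk I G) - 1) ?U = G"
    using Ustar_min_generator(1)[OF assms] by blast+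
  then have "G \<subseteq> cl E I ?U"
    using clk_least[OF cl_superset flat_k_closed[OF flat_cl]] by metis
  then have "rk I G \<le> rk I ?U"
    using rk_mono rk_cl[OF U(1)] by metis
  then show ?thesis
    using rk_le_card[OF finite_Ustar[OF assms]] by simp
qed

text \<open>A dependent set W of size at most rk G contains an element w spanned by W - {w}; since
  |W - {w}| < rk G, every (rk G - 1)-closed superset of U*_G - {w} contains w, so U*_G - {w}
  would be a smaller generator of G.\<close>

lemma indep_if_subset_Ustar:
  assumes G: "flat E I G" and W: "W \<subseteq> Ustar E I G" "card W \<le> rk I G"
  shows "W \<in> I"
proof (rule ccontr)
  assume dep: "W \<notin> I"
  let ?U = "Ustar E I G" and ?j = "int (rk I G) - 1"
  have U: "?U \<subseteq> E" "clk E I ?j ?U = G" "finite ?U"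
    using Ustar_min_generator(1)[OF G] finite_Ustar[OF G] by blast+
  have fin: "finite W"
    using W(1) U(3) finite_subset by blast
  obtain B where B: "B \<subseteq> W" "B \<in> I" "card B = rk I W"
    using rk_basis_exists by blast
  have "B \<noteq> W"
    using B(2) dep by blast
  then obtain w where w: "w \<in> W" "w \<notin> B"
    using B(1) by blast
  have "B \<subseteq> W - {w}"
    using B(1) w(2) by blast
  then have "rk I W \<le> rk I (W - {w})"
    using card_le_rk B(2,3) by metis
  then have "rk I (insert w (W - {w})) = rk I (W - {w})"
    using rk_mono[of "W - {w}" W] w(1) by (simp add: insert_absorb)
  then have w_cl: "w \<in> cl E I (W - {w})"
    unfolding cl_def using w(1) W(1) U(1) by blast
  have small: "int (card (W - {w})) \<le> ?j"
    using W(2) w(1) fin card_gt_0_iff[of W] by auto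
  have "clk E I ?j (?U - {w}) = clk E I ?j ?U"
  proof -
    have "?U \<subseteq> Z" if "?U - {w} \<subseteq> Z" "k_closed E I ?j Z" for Z
      using that w_cl small W(1) unfolding k_closed_def by blast
    then have "{Z. ?U - {w} \<subseteq> Z \<and> k_closed E I ?j Z} = {Z. ?U \<subseteq> Z \<and> k_closed E I ?j Z}"
      by blast
    then show ?thesis
      unfolding clk_def by simp
  qed
  then have "card ?U \<le> card (?U - {w})"
    using Ustar_min_generator(2)[OF G, of "?U - {w}"] U by auto
  moreover have "card (?U - {w}) < card ?U"
    using w(1) W(1) U(3) by (meson card_Diff1_less subset_eq)
  ultimately show False
    by simp
qed

lemma V_k_rk_le: "V \<in> V_k E I k \<Longrightarrow> V \<subseteq> E \<and> rk I V \<le> k"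
proof -
  assume "V \<in> V_k E I k"
  then obtain G where G: "flat E I G" "rk I G = k" "V \<subseteq> Ustar E I G"
    unfolding V_k_def Ustar_k_def Vsets_def consecutive_def by blast
  then have "V \<subseteq> G"
    using Ustar_subset_flat by blast
  then show ?thesis
    using G rk_mono[of V G] unfolding flat_def by auto
qed

context
  fixes k :: nat and \<H> :: "'a set set"
  assumes k_le: "k \<le> rk I E"
    and final: "knuth_final E (truncation I k) (V_k E I k) \<H>"
begin

lemma final_member_rk_le: "A \<in> \<H> \<Longrightarrow> A \<subseteq> E \<and> rk I A \<le> k"
proof -
  have init: "\<forall>A\<in>knuth_init E (truncation I k) (V_k E I k). A \<subseteq> E \<and> rk I A \<le> k"
    using knuth_init_truncation_rk_le[OF k_le] V_k_rk_le by blast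
  have "(knuth_step E (truncation I k))\<^sup>*\<^sup>* (knuth_init E (truncation I k) (V_k E I k)) \<H>"
    using final unfolding knuth_final_def by blast
  then have "\<forall>A\<in>\<H>. A \<subseteq> E \<and> rk I A \<le> k"
    by (induction rule: rtranclp_induct) (use init knuth_step_truncation_rk_le[OF k_le] in blast)+
  then show "A \<in> \<H> \<Longrightarrow> A \<subseteq> E \<and> rk I A \<le> k"
    by blast
qed

lemma final_eq_if_common_rk:
  assumes "A \<in> \<H>" "B \<in> \<H>" "C \<subseteq> A" "C \<subseteq> B" "k \<le> rk I C"
  shows "A = B"
proof -
  have "k \<le> rk I (A \<inter> B)"
    using assms(3-5) rk_mono[of C "A \<inter> B"] by simp
  then have "rk (truncation I k) (A \<inter> B) = rk (truncation I k) E"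
    using k_le by (simp add: rk_truncation)
  then show ?thesis
    using knuth_final_eq_if_rk_Int[OF final assms(1,2)] by blast
qed

text \<open>For e \<in> A - cl B, the initial set cl B + e lies in a final set sharing the rank-k set B + e
  with A, hence equal to A.\<close>

lemma closure_subset_final_member:
  assumes A: "A \<in> \<H>" "k \<le> rk I A" and B: "B \<subseteq> A" "B \<in> I" "card B + 1 = k"
  shows "cl E I B \<subseteq> A"
proof -
  have AE: "A \<subseteq> E"
    using final_member_rk_le A(1) by blast
  then have BE: "B \<subseteq> E"
    using B(1) by blast
  have rk_cl_B: "rk I (cl E I B) + 1 = k"
    using rk_cl[OF BE] rk_indep[OF B(2)] B(3) by simp
  then have "\<not> A \<subseteq> cl E I B"
    using rk_mono[of A "cl E I B"] A(2) by auto
  then obtain e where e: "e \<in> A" "e \<notin> cl E I B"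
    by blast
  then have "insert e (cl E I B) \<in> knuth_init E (truncation I k) (V_k E I k)"
    using insert_hyperplane_in_knuth_init_truncation[OF flat_cl[OF BE] rk_cl_B k_le] AE by blast
  then obtain A' where A': "A' \<in> \<H>" "insert e (cl E I B) \<subseteq> A'"
    using knuth_final_covers_init[OF final] by blast
  have "rk I (insert e B) = Suc (rk I B)"
    using rk_insert_not_in_cl e AE by blast
  then have "k \<le> rk I (insert e B)"
    using rk_indep[OF B(2)] B(3) by simp
  moreover have "insert e B \<subseteq> A" "insert e B \<subseteq> A'"
    using e(1) B(1) A'(2) cl_superset[OF BE] by auto
  ultimately have "A = A'"
    using final_eq_if_common_rk[OF A(1) A'(1)] by blast
  then show ?thesis
    using A'(2) by blast
qed

lemma final_member_k_closed:
  assumes A: "A \<in> \<H>" "k \<le> rk I A"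
  shows "k_closed E I (int k - 1) A"
  unfolding k_closed_def
proof (intro conjI allI impI)
  show AE: "A \<subseteq> E"
    using final_member_rk_le A(1) by blast
  fix Y assume Y: "Y \<subseteq> A \<and> int (card Y) \<le> int k - 1"
  then have "finite Y"
    using AE finite_ground finite_subset[of Y E] by blast
  have "card Y + 1 \<le> k"
    using Y by linarith
  then have rY: "rk I Y \<le> k - 1"
    using rk_le_card[OF \<open>finite Y\<close>] by linarith
  have YA: "Y \<subseteq> A" and rA: "k - 1 \<le> rk I A"
    using Y A(2) by auto
  obtain B where B: "B \<subseteq> A" "B \<in> I" "card B = k - 1" "Y \<subseteq> cl E I B"
    using indep_spanning_subset[OF YA AE rY rA] by blast
  then have "cl E I B \<subseteq> A"
    using closure_subset_final_member[OF A] \<open>card Y + 1 \<le> k\<close> by simp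
  moreover have "cl E I Y \<subseteq> cl E I B"
    using cl_mono[OF B(4)] cl_idem B(1) AE by (metis subset_trans)
  ultimately show "cl E I Y \<subseteq> A"
    by blast
qed

lemma flat_subset_final_member:
  assumes "flat E I G" "rk I G = k" "A \<in> \<H>" "Ustar E I G \<subseteq> A" "k \<le> rk I A"
  shows "G \<subseteq> A"
  using clk_least[OF assms(4) final_member_k_closed[OF assms(3,5)]]
    Ustar_min_generator(1)[OF assms(1)] assms(2) by simp

text \<open>Here U*_G is a basis of G; removing an element u leaves a set whose closure is a hyperplane
  of the truncation missing u, and that hyperplane plus u is an initial set containing U*_G.\<close>

lemma flat_covered_if_card_Ustar_le:
  assumes G: "flat E I G" "rk I G = k" "G \<noteq> {}" and card_le: "card (Ustar E I G) \<le> k"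
  shows "\<exists>A\<in>\<H>. G \<subseteq> A"
proof -
  let ?U = "Ustar E I G"
  have U: "?U \<subseteq> E" "clk E I (int k - 1) ?U = G"
    using Ustar_min_generator(1)[OF G(1)] G(2) by auto
  have card_U: "card ?U = k"
    using rk_le_card_Ustar[OF G(1)] card_le G(2) by simp
  have U_indep: "?U \<in> I"
    using indep_if_subset_Ustar[OF G(1) order_refl] card_U G(2) by simp
  have "?U \<noteq> {}"
    using U(2) clk_minus_one[of "{}" E I] G(3) card_U by force
  then obtain u where u: "u \<in> ?U"
    by blast
  have "k \<noteq> 0"
    using card_U u finite_Ustar[OF G(1)] card_gt_0_iff by fastforce
  define B where "B = ?U - {u}"
  have B: "B \<in> I" "B \<subseteq> E" "insert u B = ?U" "card B + 1 = k"
    using indep_subset[OF U_indep] U u card_U \<open>k \<noteq> 0\<close> finite_Ustar[OF G(1)]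
    unfolding B_def by auto
  have "u \<notin> cl E I B"
    using B rk_indep[OF U_indep] rk_indep[OF B(1)] card_U unfolding cl_def by auto
  then have "insert u (cl E I B) \<in> knuth_init E (truncation I k) (V_k E I k)"
    using insert_hyperplane_in_knuth_init_truncation[OF flat_cl[OF B(2)] _ k_le]
      rk_cl[OF B(2)] rk_indep[OF B(1)] B(4) u U(1) by auto
  then obtain A where A: "A \<in> \<H>" "insert u (cl E I B) \<subseteq> A"
    using knuth_final_covers_init[OF final] by blast
  then have "?U \<subseteq> A"
    using B(3) cl_superset[OF B(2)] by blast
  moreover have "k \<le> rk I A"
    using rk_mono[OF \<open>?U \<subseteq> A\<close>] rk_indep[OF U_indep] card_U by simp
  ultimately show ?thesis
    using flat_subset_final_member[OF G(1,2) A(1)] A(1) by blast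
qed

lemma flat_covered_if_card_Ustar_gt:
  assumes G: "flat E I G" "rk I G = k" and card_gt: "k < card (Ustar E I G)"
  shows "\<exists>A\<in>\<H>. G \<subseteq> A"
proof -
  let ?U = "Ustar E I G"
  have "Vsets k ?U \<subseteq> knuth_init E (truncation I k) (V_k E I k)"
    using G card_gt unfolding knuth_init_def V_k_def Ustar_k_def by blast
  then have cover: "\<exists>A\<in>\<H>. V \<subseteq> A" if "V \<in> Vsets k ?U" for V
    using knuth_final_covers_init[OF final] that by blast
  have "k \<le> rk I C" if "C \<subseteq> ?U" "card C = k" for C
    using indep_if_subset_Ustar[OF G(1) that(1)] rk_indep that(2) G(2) by simp
  then have merge: "A = B" if "A \<in> \<H>" "B \<in> \<H>" "C \<subseteq> ?U" "card C = k" "C \<subseteq> A" "C \<subseteq> B"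
    for A B C
    using final_eq_if_common_rk that by blast
  have "\<exists>A\<in>\<H>. ?U \<subseteq> A"
    by (rule subset_member_if_consecutive_windows_covered[OF finite_Ustar[OF G(1)] card_gt])
      (fact cover, fact merge)
  then obtain A where A: "A \<in> \<H>" "?U \<subseteq> A"
    by blast
  obtain W where W: "W \<subseteq> ?U" "card W = k"
    using card_gt by (meson less_imp_le obtain_subset_with_card_n)
  then have "k \<le> rk I A"
    using indep_if_subset_Ustar[OF G(1) W(1)] card_le_rk[of W A] A(2) G(2) by auto
  then show ?thesis
    using flat_subset_final_member[OF G A] A(1) by blast
qed

lemma flat_covered:
  assumes "flat E I G" "rk I G = k" "G \<noteq> {}"
  shows "\<exists>A\<in>\<H>. G \<subseteq> A"
proof (cases "k < card (Ustar E I G)")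
  case True
  then show ?thesis
    using flat_covered_if_card_Ustar_gt assms(1,2) by blast
next
  case False
  then show ?thesis
    using flat_covered_if_card_Ustar_le assms by simp
qed

lemma indep_iff_not_in_final_member:
  assumes "J \<subseteq> E" "card J = Suc k"
  shows "J \<in> I \<longleftrightarrow> \<not> (\<exists>A\<in>\<H>. J \<subseteq> A)"
proof
  assume "J \<in> I"
  show "\<not> (\<exists>A\<in>\<H>. J \<subseteq> A)"
  proof
    assume "\<exists>A\<in>\<H>. J \<subseteq> A"
    then obtain A where A: "A \<in> \<H>" "J \<subseteq> A"
      by blast
    then have "Suc k \<le> rk I A"
      using rk_mono[of J A] rk_indep[OF \<open>J \<in> I\<close>] assms(2) by simp
    with final_member_rk_le[OF A(1)] show False
      by simp
  qed
next
  assume not_covered: "\<not> (\<exists>A\<in>\<H>. J \<subseteq> A)"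
  show "J \<in> I"
  proof (rule ccontr)
    assume "J \<notin> I"
    obtain B where B: "B \<subseteq> J" "B \<in> I" "card B = rk I J"
      using rk_basis_exists by blast
    then have "B \<subset> J"
      using \<open>J \<notin> I\<close> by blast
    then have "rk I J \<le> k"
      using psubset_card_mono[of J B] assms finite_ground finite_subset B(3) by fastforce
    then obtain C where C: "C \<subseteq> E" "C \<in> I" "card C = k" "J \<subseteq> cl E I C"
      using indep_spanning_subset[OF assms(1) order_refl _ k_le] by blast
    define G where "G = cl E I C"
    have G: "flat E I G" "rk I G = k" "G \<noteq> {}"
      unfolding G_def using flat_cl[OF C(1)] rk_cl[OF C(1)] rk_indep[OF C(2)] C(3,4) assms(2)
      by auto
    then show False
      using flat_covered not_covered C(4) unfolding G_def by blast
  qed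
qed

end

lemma erect_truncation:
  assumes "k \<le> rk I E"
  shows "erect E (truncation I k) (V_k E I k) = truncation I (Suc k)"
proof -
  let ?\<H> = "knuth_out E (truncation I k) (V_k E I k)"
  have "finite (knuth_init E (truncation I k) (V_k E I k))"
    using finite_knuth_init finite_ground V_k_rk_le by blast
  then have final: "knuth_final E (truncation I k) (V_k E I k) ?\<H>"
    by (rule knuth_out_final)
  have "erect E (truncation I k) (V_k E I k) =
      truncation I k \<union> {J. J \<subseteq> E \<and> card J = Suc k \<and> \<not> (\<exists>A\<in>?\<H>. J \<subseteq> A)}"
    unfolding erect_def using rk_truncation_ground[OF assms] by simp
  also have "\<dots> = truncation I (Suc k)"
    using indep_iff_not_in_final_member[OF assms final] indep_subset_ground
    unfolding truncation_def by (auto simp: le_Suc_eq)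
  finally show ?thesis .
qed

lemma M_seq_truncation: "k \<le> rk I E \<Longrightarrow> M_seq E (map (V_k E I) [0..<k]) = truncation I k"
proof (induction k)
  case 0
  then show ?case
    unfolding M_seq_def using truncation_0 by simp
next
  case (Suc k)
  then show ?case
    using erect_truncation[of k] unfolding M_seq_def by simp
qed

end

theorem lemma5p7:
  fixes E :: "'a::linorder set" and I :: "'a set set" and r :: nat
  assumes "matroid E I"
    and "rk I E = r"
  shows "I = M_seq E (map (V_k E I) [0..<r])"
proof -
  interpret ordered_indep_matroid E I
    by unfold_locales (rule assms(1))
  show ?thesis
    using M_seq_truncation[of r] truncation_rk_ground assms(2) by simp
qed

end
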